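(* Let $\mathcal{E}$ be a Banach space of analytic functions on an annulus $\{r<|z|<R\}$ (with $0\le r<R\le\infty$) such that all evaluation functionals are continuous, and suppose $k_n\ne0$ for all $n\in\mathbb{Z}$. If $w=(w_n)_{n\in\mathbb{Z}}$ is a complex sequence such that $B_w$ is a bounded operator on $\mathcal{E}$, then $$\sup_{n\in\mathbb{Z}}\ |w_{n+1}|\frac{\|k_{n+1}\|}{\|k_n\|}<\infty.$$
   Context: For $f\in\mathcal{E}$ with Laurent expansion $f(z)=\sum_{n\in\mathbb{Z}}\widehat f(n)z^n$, $k_n(f)=\widehat f(n)$ is the $n$-th coefficient functional (a continuous linear functional on $\mathcal{E}$), and $\|k_n\|$ is its norm in $\mathcal{E}^*$. $B_w$ acts by $B_w(\sum_n\widehat f(n)z^n)=\sum_nw_n\widehat f(n)z^{n-1}$. *)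

theory Defs
  imports "HOL-Complex_Analysis.Complex_Analysis"
begin

definition annulus :: "real \<Rightarrow> ereal \<Rightarrow> complex set" where
  "annulus r R = {z. r < norm z \<and> ereal (norm z) < R}"

definition mid_radius :: "real \<Rightarrow> ereal \<Rightarrow> real" where
  "mid_radius r R = (SOME \<rho>. r < \<rho> \<and> ereal \<rho> < R)"

text \<open>n-th Laurent coefficient of f, computed on a circle inside the annulus
  (independent of the radius by Cauchy's theorem).\<close>
definition laurent_coeff :: "real \<Rightarrow> ereal \<Rightarrow> (complex \<Rightarrow> complex) \<Rightarrow> int \<Rightarrow> complex" where
  "laurent_coeff r R f n =
     contour_integral (circlepath 0 (mid_radius r R)) (\<lambda>z. f z * z powi (- (n + 1)))
       / (2 * of_real pi * \<i>)"

text \<open>E with norm N is a Banach space of analytic functions on the annulus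
  (functions identified when they agree on the annulus) with continuous
  point evaluations.\<close>
definition banach_space_of_analytic ::
  "real \<Rightarrow> ereal \<Rightarrow> (complex \<Rightarrow> complex) set \<Rightarrow> ((complex \<Rightarrow> complex) \<Rightarrow> real) \<Rightarrow> bool" where
  "banach_space_of_analytic r R E N \<longleftrightarrow>
     (\<forall>f\<in>E. f holomorphic_on annulus r R) \<and>
     (\<lambda>z. 0) \<in> E \<and>
     (\<forall>f\<in>E. \<forall>g\<in>E. (\<lambda>z. f z + g z) \<in> E) \<and>
     (\<forall>f\<in>E. \<forall>c. (\<lambda>z. c * f z) \<in> E) \<and>
     (\<forall>f\<in>E. 0 \<le> N f) \<and>
     (\<forall>f\<in>E. N f = 0 \<longleftrightarrow> (\<forall>z\<in>annulus r R. f z = 0)) \<and>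
     (\<forall>f\<in>E. \<forall>g\<in>E. (\<forall>z\<in>annulus r R. f z = g z) \<longrightarrow> N f = N g) \<and>
     (\<forall>f\<in>E. \<forall>g\<in>E. N (\<lambda>z. f z + g z) \<le> N f + N g) \<and>
     (\<forall>f\<in>E. \<forall>c. N (\<lambda>z. c * f z) = norm c * N f) \<and>
     (\<forall>F. (\<forall>k. F k \<in> E) \<and>
          (\<forall>e>0. \<exists>M. \<forall>m\<ge>M. \<forall>n\<ge>M. N (\<lambda>z. F m z - F n z) < e) \<longrightarrow>
          (\<exists>f\<in>E. (\<lambda>k. N (\<lambda>z. F k z - f z)) \<longlonglongrightarrow> 0)) \<and>
     (\<forall>z\<in>annulus r R. \<exists>C. \<forall>f\<in>E. norm (f z) \<le> C * N f)"

text \<open>Norm of the coefficient functional k_n in the dual of E.\<close>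
definition coeff_functional_norm ::
  "real \<Rightarrow> ereal \<Rightarrow> (complex \<Rightarrow> complex) set \<Rightarrow> ((complex \<Rightarrow> complex) \<Rightarrow> real) \<Rightarrow> int \<Rightarrow> real" where
  "coeff_functional_norm r R E N n =
     Sup {norm (laurent_coeff r R f n) | f. f \<in> E \<and> N f \<le> 1}"

definition bounded_weighted_backward_shift ::
  "real \<Rightarrow> ereal \<Rightarrow> (complex \<Rightarrow> complex) set \<Rightarrow> ((complex \<Rightarrow> complex) \<Rightarrow> real) \<Rightarrow> (int \<Rightarrow> complex) \<Rightarrow> bool" where
  "bounded_weighted_backward_shift r R E N w \<longleftrightarrow>
     (\<exists>T. (\<forall>f\<in>E. T f \<in> E \<and> (\<forall>n. laurent_coeff r R (T f) (n - 1) = w n * laurent_coeff r R f n)) \<and>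
          (\<exists>C. \<forall>f\<in>E. N (T f) \<le> C * N f))"

end

theory Submission
  imports Defs
begin

(*
  The n-th coefficient of B_w f is w_(n+1) times the (n+1)-th coefficient of f, hence
  |w_(n+1)| |k_(n+1) f| = |k_n (B_w f)| <= ||k_n|| ||B_w|| ||f||, and every quotient is at most ||B_w||.
  The substance is that each k_n is a bounded functional, so that ||k_n|| is a finite supremum:
  k_n is an integral over a circle inside the annulus, and the point evaluations on that circle are
  uniformly bounded by the uniform boundedness principle (each one is bounded, and each f is bounded
  on the compact circle), which follows from completeness by a gliding hump argument.
*)

lemma halving_imp_LIMSEQ_zero:
  fixes D :: "nat \<Rightarrow> real"
  assumes "\<And>k. 0 \<le> D k" and "\<And>k. D (Suc k) \<le> D k / 2"
  shows "D \<longlonglongrightarrow> 0"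
proof (rule tendsto_sandwich[OF _ _ tendsto_const])
  have "D k \<le> D 0 * (1 / 2) ^ k" for k
  proof (induction k)
    case (Suc k)
    then show ?case using assms(2)[of k] by simp
  qed simp
  then show "\<forall>\<^sub>F k in sequentially. D k \<le> D 0 * (1 / 2) ^ k" by simp
  show "(\<lambda>k. D 0 * (1 / 2) ^ k) \<longlonglongrightarrow> 0"
    by (intro tendsto_mult_right_zero LIMSEQ_realpow_zero) auto
qed (use assms(1) in simp)

locale complete_seminormed_function_space =
  fixes E :: "('a \<Rightarrow> complex) set" and N :: "('a \<Rightarrow> complex) \<Rightarrow> real"
  assumes zero_mem: "(\<lambda>z. 0) \<in> E"
    and add_mem: "f \<in> E \<Longrightarrow> g \<in> E \<Longrightarrow> (\<lambda>z. f z + g z) \<in> E"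
    and cmult_mem: "f \<in> E \<Longrightarrow> (\<lambda>z. c * f z) \<in> E"
    and nonneg: "f \<in> E \<Longrightarrow> 0 \<le> N f"
    and triangle: "f \<in> E \<Longrightarrow> g \<in> E \<Longrightarrow> N (\<lambda>z. f z + g z) \<le> N f + N g"
    and cmult: "f \<in> E \<Longrightarrow> N (\<lambda>z. c * f z) = norm c * N f"
    and complete: "(\<And>k. F k \<in> E) \<Longrightarrow>
       (\<forall>e>0. \<exists>M. \<forall>m\<ge>M. \<forall>n\<ge>M. N (\<lambda>z. F m z - F n z) < e) \<Longrightarrow>
       \<exists>f\<in>E. (\<lambda>k. N (\<lambda>z. F k z - f z)) \<longlonglongrightarrow> 0"
begin

lemma diff_mem: "f \<in> E \<Longrightarrow> g \<in> E \<Longrightarrow> (\<lambda>z. f z - g z) \<in> E"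
  using add_mem[of f "\<lambda>z. -1 * g z"] cmult_mem[of g "-1"] by simp

lemma N_zero: "N (\<lambda>z. 0) = 0"
  using cmult[OF zero_mem, of 0] by simp

lemma N_minus_commute: "f \<in> E \<Longrightarrow> g \<in> E \<Longrightarrow> N (\<lambda>z. f z - g z) = N (\<lambda>z. g z - f z)"
  using cmult[OF diff_mem[of g f], of "-1"] by simp

lemma triangle_diff:
  assumes "f \<in> E" "g \<in> E" "h \<in> E"
  shows "N (\<lambda>z. f z - h z) \<le> N (\<lambda>z. f z - g z) + N (\<lambda>z. g z - h z)"
  using triangle[OF diff_mem[of f g] diff_mem[of g h]] assms by simp

lemma halving_steps_distance:
  assumes G: "\<And>k. G k \<in> E"
    and small_steps: "\<And>k. N (\<lambda>z. G (Suc k) z - G k z) \<le> D k"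
    and halve: "\<And>k. D (Suc k) \<le> D k / 2"
    and "M \<le> j" "M \<le> k"
  shows "N (\<lambda>z. G j z - G k z) \<le> 2 * D M"
proof -
  have D_nonneg: "0 \<le> D k" for k
    using nonneg[OF diff_mem[OF G G]] small_steps order_trans by blast
  then have "decseq D"
    using halve by (intro decseq_SucI) (smt (verit, best) field_sum_of_halves)
  have tail: "N (\<lambda>z. G j z - G k z) \<le> 2 * D k - 2 * D j" if "k \<le> j" for j k
    using that
  proof (induction j rule: dec_induct)
    case base
    then show ?case using N_zero by simp
  next
    case (step j)
    then show ?case
      using triangle_diff[OF G[of "Suc j"] G[of j] G[of k]] small_steps[of j] halve[of j] by linarith
  qed
  show ?thesis
  proof (cases "k \<le> j")
    case True
    then show ?thesis using tail[OF True] D_nonneg[of j] decseqD[OF \<open>decseq D\<close> \<open>M \<le> k\<close>] by linarith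
  next
    case False
    then show ?thesis
      using tail[of j k] N_minus_commute[OF G[of j] G[of k]] D_nonneg[of k]
        decseqD[OF \<open>decseq D\<close> \<open>M \<le> j\<close>] by linarith
  qed
qed

lemma limit_of_halving_steps:
  assumes G: "\<And>k. G k \<in> E"
    and small_steps: "\<And>k. N (\<lambda>z. G (Suc k) z - G k z) \<le> D k"
    and halve: "\<And>k. D (Suc k) \<le> D k / 2"
  shows "\<exists>f\<in>E. \<forall>k. N (\<lambda>z. f z - G k z) \<le> 2 * D k"
proof -
  note distance = halving_steps_distance[of G D, OF G small_steps halve]
  have "D \<longlonglongrightarrow> 0"
    using nonneg[OF diff_mem[OF G G]] small_steps halve
    by (intro halving_imp_LIMSEQ_zero) (blast intro: order_trans)
  have "\<forall>e>0. \<exists>M. \<forall>m\<ge>M. \<forall>n\<ge>M. N (\<lambda>z. G m z - G n z) < e"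
  proof (intro allI impI)
    fix e :: real assume "0 < e"
    then obtain M where "2 * D M < e"
      using order_tendstoD(2)[OF \<open>D \<longlonglongrightarrow> 0\<close>, of "e / 2"]
      by (auto simp: eventually_sequentially mult.commute)
    then show "\<exists>M. \<forall>m\<ge>M. \<forall>n\<ge>M. N (\<lambda>z. G m z - G n z) < e"
      using distance[of M] by (intro exI[of _ M]) (meson le_less_trans)
  qed
  from complete[OF G this] obtain f where f: "f \<in> E" "(\<lambda>j. N (\<lambda>z. G j z - f z)) \<longlonglongrightarrow> 0"
    by blast
  have "N (\<lambda>z. f z - G k z) \<le> 2 * D k" for k
  proof -
    have lim: "(\<lambda>j. N (\<lambda>z. G j z - f z) + 2 * D k) \<longlonglongrightarrow> 0 + 2 * D k"
      by (intro tendsto_add f(2) tendsto_const)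
    have "\<forall>j\<ge>k. N (\<lambda>z. f z - G k z) \<le> N (\<lambda>z. G j z - f z) + 2 * D k"
    proof (intro allI impI)
      fix j assume "k \<le> j"
      then show "N (\<lambda>z. f z - G k z) \<le> N (\<lambda>z. G j z - f z) + 2 * D k"
        using triangle_diff[OF f(1) G[of j] G[of k]] N_minus_commute[OF f(1) G[of j]]
          distance[OF \<open>k \<le> j\<close> order_refl] by linarith
    qed
    then show ?thesis
      using LIMSEQ_le_const[OF lim, of "N (\<lambda>z. f z - G k z)"] by auto
  qed
  with f(1) show ?thesis by blast
qed

lemma gliding_hump_sequence:
  assumes C_pos: "\<And>z. z \<in> S \<Longrightarrow> 0 < C z"
    and escape: "\<And>f0 \<delta> m. f0 \<in> E \<Longrightarrow> 0 < \<delta> \<Longrightarrow>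
       \<exists>g\<in>E. \<exists>z\<in>S. N (\<lambda>x. g x - f0 x) < \<delta> \<and> m < norm (g z)"
  obtains G D Z where "\<And>k. G k \<in> E" "\<And>k. Z k \<in> S" "\<And>k. real k < norm (G k (Z k))"
    "\<And>k. 2 * C (Z k) * D k \<le> 1" "\<And>k. N (\<lambda>x. G (Suc k) x - G k x) < D k"
    "\<And>k. D (Suc k) \<le> D k / 2"
proof -
  define P where "P n = (\<lambda>(g, \<delta>, z). g \<in> E \<and> 0 < \<delta> \<and> z \<in> S \<and>
      real n < norm (g z) \<and> 2 * C z * \<delta> \<le> 1)" for n :: nat
  define Q where "Q n = (\<lambda>(g, \<delta>, z::'a) (g', \<delta>', z'::'a). N (\<lambda>x. g' x - g x) < \<delta> \<and> \<delta>' \<le> \<delta> / 2)"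
    for n :: nat
  have next_hump: "\<exists>\<delta>'. P n (g', \<delta>', z') \<and> \<delta>' \<le> \<epsilon>"
    if "0 < \<epsilon>" "g' \<in> E" "z' \<in> S" "real n < norm (g' z')" for n g' z' \<epsilon>
  proof -
    have "2 * C z' * min \<epsilon> (1 / (2 * C z')) \<le> 2 * C z' * (1 / (2 * C z'))"
      using C_pos[OF that(3)] by (intro mult_left_mono) auto
    then show ?thesis
      using that C_pos[OF that(3)] unfolding P_def
      by (intro exI[of _ "min \<epsilon> (1 / (2 * C z'))"]) auto
  qed
  have "\<exists>x. P 0 x"
    using escape[OF zero_mem zero_less_one, of 0] next_hump[OF zero_less_one, of _ _ 0] by fastforce
  moreover have "\<exists>y. P (Suc n) y \<and> Q n x y" if "P n x" for n x
  proof -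
    obtain g \<delta> z where x: "x = (g, \<delta>, z)" by (cases x)
    with that obtain g' z' where g': "g' \<in> E" "z' \<in> S" "N (\<lambda>x. g' x - g x) < \<delta>"
        "real (Suc n) < norm (g' z')"
      using escape[of g \<delta> "real (Suc n)"] unfolding P_def by auto
    moreover have "0 < \<delta> / 2" using that unfolding P_def x by simp
    ultimately obtain \<delta>' where "P (Suc n) (g', \<delta>', z')" "\<delta>' \<le> \<delta> / 2"
      using next_hump by blast
    with g'(3) show ?thesis unfolding Q_def x by auto
  qed
  ultimately obtain X where X: "\<And>n. P n (X n) \<and> Q n (X n) (X (Suc n))"
    using dependent_nat_choice[of P Q] by blast
  show ?thesis
  proof
    fix k
    show "fst (X k) \<in> E" "snd (snd (X k)) \<in> S" "real k < norm (fst (X k) (snd (snd (X k))))"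
      "2 * C (snd (snd (X k))) * fst (snd (X k)) \<le> 1"
      using X[of k] unfolding P_def by (simp_all add: split_beta)
    show "N (\<lambda>x. fst (X (Suc k)) x - fst (X k) x) < fst (snd (X k))"
      "fst (snd (X (Suc k))) \<le> fst (snd (X k)) / 2"
      using X[of k] unfolding Q_def by (simp_all add: split_beta)
  qed
qed

lemma ball_with_bounded_evaluations:
  assumes eval_bounded: "\<And>z. z \<in> S \<Longrightarrow> \<exists>C. \<forall>f\<in>E. norm (f z) \<le> C * N f"
    and pointwise_bounded: "\<And>f. f \<in> E \<Longrightarrow> bounded (f ` S)"
  shows "\<exists>f0\<in>E. \<exists>\<delta>>0. \<exists>m. \<forall>g\<in>E. N (\<lambda>x. g x - f0 x) < \<delta> \<longrightarrow> (\<forall>z\<in>S. norm (g z) \<le> m)"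
proof (rule ccontr)
  assume "\<not> ?thesis"
  then have escape: "\<exists>g\<in>E. \<exists>z\<in>S. N (\<lambda>x. g x - f0 x) < \<delta> \<and> m < norm (g z)"
    if "f0 \<in> E" "0 < \<delta>" for f0 \<delta> m
    using that by (force simp: not_le)
  have "\<forall>z\<in>S. \<exists>c>0. \<forall>f\<in>E. norm (f z) \<le> c * N f"
  proof
    fix z assume "z \<in> S"
    then obtain c where "\<forall>f\<in>E. norm (f z) \<le> c * N f" using eval_bounded by blast
    then have "\<forall>f\<in>E. norm (f z) \<le> max c 1 * N f"
      by (meson max.cobounded1 mult_right_mono nonneg order_trans)
    then show "\<exists>c>0. \<forall>f\<in>E. norm (f z) \<le> c * N f" by (intro exI[of _ "max c 1"]) auto
  qed
  then obtain C where C: "\<And>z. z \<in> S \<Longrightarrow> 0 < C z \<and> (\<forall>f\<in>E. norm (f z) \<le> C z * N f)"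
    by metis
  obtain G D Z where G: "\<And>k. G k \<in> E" and Z: "\<And>k. Z k \<in> S"
    and hump: "\<And>k. real k < norm (G k (Z k))" and D_small: "\<And>k. 2 * C (Z k) * D k \<le> 1"
    and steps: "\<And>k. N (\<lambda>x. G (Suc k) x - G k x) < D k" and halve: "\<And>k. D (Suc k) \<le> D k / 2"
    by (rule gliding_hump_sequence[of S C, OF _ escape]) (use C in blast)+
  obtain f where f: "f \<in> E" and close: "\<And>k. N (\<lambda>x. f x - G k x) \<le> 2 * D k"
    using limit_of_halving_steps[of G D, OF G _ halve] steps less_imp_le by blast
  \<comment> \<open>\<open>2 * C (Z k) * D k \<le> 1\<close> keeps the limit within 1 of the hump \<open>G k\<close> at \<open>Z k\<close>\<close>
  have lower: "real k - 1 < norm (f (Z k))" for k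
  proof -
    have "norm (f (Z k) - G k (Z k)) \<le> C (Z k) * N (\<lambda>x. f x - G k x)"
      using C[OF Z] diff_mem[OF f G] by fastforce
    also have "\<dots> \<le> C (Z k) * (2 * D k)"
      using C[OF Z] close by (intro mult_left_mono) (auto simp: less_imp_le)
    also have "\<dots> \<le> 1" using D_small[of k] by simp
    finally show ?thesis using hump[of k] norm_triangle_ineq2[of "G k (Z k)" "f (Z k)"]
      by (simp add: norm_minus_commute)
  qed
  obtain B where B: "\<And>z. z \<in> S \<Longrightarrow> norm (f z) \<le> B"
    using pointwise_bounded[OF f] by (auto simp: bounded_iff)
  obtain k :: nat where "B + 1 < real k" using reals_Archimedean2 by blast
  with B[OF Z[of k]] lower[of k] show False by linarith
qed

theorem uniform_boundedness_evaluations: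
  assumes eval_bounded: "\<And>z. z \<in> S \<Longrightarrow> \<exists>C. \<forall>f\<in>E. norm (f z) \<le> C * N f"
    and pointwise_bounded: "\<And>f. f \<in> E \<Longrightarrow> bounded (f ` S)"
  shows "\<exists>K. \<forall>f\<in>E. \<forall>z\<in>S. norm (f z) \<le> K * N f"
proof -
  obtain f0 \<delta> m where f0: "f0 \<in> E" and "0 < \<delta>"
    and ball: "\<And>g z. g \<in> E \<Longrightarrow> N (\<lambda>x. g x - f0 x) < \<delta> \<Longrightarrow> z \<in> S \<Longrightarrow> norm (g z) \<le> m"
    using ball_with_bounded_evaluations[OF assms] by blast
  have "norm (h z) \<le> 4 * m / \<delta> * N h" if h: "h \<in> E" and z: "z \<in> S" for h z
  proof (cases "N h = 0")
    case True
    obtain C where "\<forall>f\<in>E. norm (f z) \<le> C * N f" using eval_bounded[OF z] by blast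
    with h True show ?thesis by fastforce
  next
    case False
    then have "0 < N h" using nonneg[OF h] by simp
    define c where "c = \<delta> / (2 * N h)"
    have "0 < c" using \<open>0 < N h\<close> \<open>0 < \<delta>\<close> by (simp add: c_def)
    have "N (\<lambda>x. (f0 x + c * h x) - f0 x) = c * N h"
      using cmult[OF h, of c] \<open>0 < c\<close> by simp
    also have "\<dots> < \<delta>" using \<open>0 < N h\<close> \<open>0 < \<delta>\<close> by (simp add: c_def)
    finally have "norm (f0 z + c * h z) \<le> m"
      using ball[OF add_mem[OF f0 cmult_mem[OF h]] _ z] by simp
    moreover have "norm (f0 z) \<le> m" using ball[OF f0 _ z] N_zero \<open>0 < \<delta>\<close> by simp
    ultimately have "c * norm (h z) \<le> 2 * m"
      using norm_triangle_ineq4[of "f0 z + c * h z" "f0 z"] \<open>0 < c\<close> by (simp add: norm_mult)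
    then show ?thesis using \<open>0 < c\<close> \<open>0 < N h\<close> by (simp add: c_def field_simps)
  qed
  then show ?thesis by blast
qed

end

definition functional_norm :: "'a set \<Rightarrow> ('a \<Rightarrow> real) \<Rightarrow> ('a \<Rightarrow> complex) \<Rightarrow> real" where
  "functional_norm E N \<phi> = Sup {norm (\<phi> f) | f. f \<in> E \<and> N f \<le> 1}"

context complete_seminormed_function_space
begin

lemma functional_norm_upper:
  assumes bounded: "\<And>f. f \<in> E \<Longrightarrow> norm (\<phi> f) \<le> C * N f"
    and f: "f \<in> E" "N f \<le> 1"
  shows "norm (\<phi> f) \<le> functional_norm E N \<phi>"
  unfolding functional_norm_def
proof (rule cSup_upper)
  show "bdd_above {norm (\<phi> f) | f. f \<in> E \<and> N f \<le> 1}"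
  proof (rule bdd_aboveI)
    fix x assume "x \<in> {norm (\<phi> f) | f. f \<in> E \<and> N f \<le> 1}"
    then obtain g where "g \<in> E" "N g \<le> 1" "x = norm (\<phi> g)" by blast
    then show "x \<le> max C 0"
      using bounded[of g] nonneg[of g] mult_mono[of C "max C 0" "N g" 1] by auto
  qed
qed (use f in blast)

lemma functional_norm_nonneg:
  assumes "\<And>f. f \<in> E \<Longrightarrow> norm (\<phi> f) \<le> C * N f"
  shows "0 \<le> functional_norm E N \<phi>"
  using functional_norm_upper[OF assms zero_mem] N_zero order_trans[OF norm_ge_zero] by simp

lemma functional_norm_le:
  assumes "\<And>f. f \<in> E \<Longrightarrow> N f \<le> 1 \<Longrightarrow> norm (\<phi> f) \<le> B"
  shows "functional_norm E N \<phi> \<le> B"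
  unfolding functional_norm_def using assms zero_mem N_zero by (intro cSup_least) auto

lemma norm_le_functional_norm:
  assumes bounded: "\<And>f. f \<in> E \<Longrightarrow> norm (\<phi> f) \<le> C * N f"
    and homogeneous: "\<And>f c. f \<in> E \<Longrightarrow> \<phi> (\<lambda>z. c * f z) = c * \<phi> f"
    and f: "f \<in> E"
  shows "norm (\<phi> f) \<le> functional_norm E N \<phi> * N f"
proof (cases "N f = 0")
  case True
  then show ?thesis using bounded[OF f] by simp
next
  case False
  then have "0 < N f" using nonneg[OF f] by simp
  define c :: complex where "c = of_real (1 / N f)"
  have "norm c = 1 / N f" using \<open>0 < N f\<close> by (simp add: c_def norm_divide)
  then have "N (\<lambda>z. c * f z) \<le> 1" using cmult[OF f] \<open>0 < N f\<close> by simp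
  from functional_norm_upper[OF bounded cmult_mem[OF f] this]
  have "norm (\<phi> f) / N f \<le> functional_norm E N \<phi>"
    using homogeneous[OF f, of c] \<open>norm c = 1 / N f\<close> by (simp add: norm_mult)
  then show ?thesis using \<open>0 < N f\<close> by (simp add: field_simps)
qed

lemma functional_norm_transpose_le:
  assumes bounded: "\<And>f. f \<in> E \<Longrightarrow> norm (\<phi> f) \<le> C\<^sub>\<phi> * N f"
    and homogeneous: "\<And>f c. f \<in> E \<Longrightarrow> \<phi> (\<lambda>z. c * f z) = c * \<phi> f"
    and T: "\<And>f. f \<in> E \<Longrightarrow> T f \<in> E" "\<And>f. f \<in> E \<Longrightarrow> N (T f) \<le> C * N f" "0 \<le> C"
    and transpose: "\<And>f. f \<in> E \<Longrightarrow> \<phi> (T f) = c * \<psi> f"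
  shows "norm c * functional_norm E N \<psi> \<le> C * functional_norm E N \<phi>"
proof (cases "c = 0")
  case True
  then show ?thesis using functional_norm_nonneg[OF bounded] \<open>0 \<le> C\<close> by simp
next
  case False
  have "norm (\<psi> f) \<le> C * functional_norm E N \<phi> / norm c" if "f \<in> E" "N f \<le> 1" for f
  proof -
    have "norm c * norm (\<psi> f) = norm (\<phi> (T f))" by (simp add: transpose[OF \<open>f \<in> E\<close>] norm_mult)
    also have "\<dots> \<le> functional_norm E N \<phi> * N (T f)"
      using norm_le_functional_norm[OF bounded homogeneous T(1)[OF \<open>f \<in> E\<close>]] .
    also have "\<dots> \<le> functional_norm E N \<phi> * C"
      using T(2)[OF \<open>f \<in> E\<close>] mult_left_le[OF \<open>N f \<le> 1\<close> \<open>0 \<le> C\<close>] functional_norm_nonneg[OF bounded]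
      by (intro mult_left_mono) auto
    finally show ?thesis using False by (simp add: field_simps)
  qed
  then have "functional_norm E N \<psi> \<le> C * functional_norm E N \<phi> / norm c"
    by (rule functional_norm_le)
  then show ?thesis using False by (simp add: field_simps)
qed

end

lemma mid_radius_bounds:
  assumes "ereal r < R"
  shows "r < mid_radius r R" "ereal (mid_radius r R) < R"
proof -
  have "\<exists>\<rho>. r < \<rho> \<and> ereal \<rho> < R" using ereal_dense2[OF assms] by auto
  then have "r < mid_radius r R \<and> ereal (mid_radius r R) < R"
    unfolding mid_radius_def by (rule someI_ex)
  then show "r < mid_radius r R" "ereal (mid_radius r R) < R" by auto
qed

lemma sphere_mid_radius_subset_annulus:
  "ereal r < R \<Longrightarrow> sphere 0 (mid_radius r R) \<subseteq> annulus r R"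
  using mid_radius_bounds[of r R] by (auto simp: annulus_def)

lemma laurent_coeff_cmult: "laurent_coeff r R (\<lambda>z. c * f z) n = c * laurent_coeff r R f n"
proof (cases "c = 0")
  case False
  let ?\<gamma> = "circlepath 0 (mid_radius r R)" and ?g = "\<lambda>z. f z * z powi (- (n + 1))"
  have "contour_integral ?\<gamma> (\<lambda>z. c * ?g z) = c * contour_integral ?\<gamma> ?g"
  proof (cases "?g contour_integrable_on ?\<gamma>")
    case True
    then show ?thesis by (rule contour_integral_lmul)
  next
    case False
    then show ?thesis
      using contour_integrable_lmul_iff[OF \<open>c \<noteq> 0\<close>] by (simp add: not_integrable_contour_integral)
  qed
  then show ?thesis by (simp add: laurent_coeff_def mult.assoc)
qed (simp add: laurent_coeff_def)

lemma norm_laurent_coeff_le: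
  assumes "0 < mid_radius r R" "0 \<le> B"
    and "\<And>z. norm z = mid_radius r R \<Longrightarrow> norm (f z) \<le> B"
  shows "norm (laurent_coeff r R f n) \<le> B * mid_radius r R powi (- n)"
proof -
  define \<rho> where "\<rho> = mid_radius r R"
  let ?g = "\<lambda>z. f z * z powi (- (n + 1))"
  have "norm (contour_integral (circlepath 0 \<rho>) ?g) \<le> B * \<rho> powi (- (n + 1)) * (2 * pi * \<rho>)"
  proof (cases "?g contour_integrable_on circlepath 0 \<rho>")
    case True
    show ?thesis
    proof (rule has_contour_integral_bound_circlepath[OF has_contour_integral_integral[OF True]])
      show "0 \<le> B * \<rho> powi (- (n + 1))" "0 < \<rho>" using assms by (simp_all add: \<rho>_def)
      fix z :: complex assume "norm (z - 0) = \<rho>"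
      then show "norm (?g z) \<le> B * \<rho> powi (- (n + 1))"
        using assms by (simp add: \<rho>_def norm_mult norm_power_int mult_right_mono)
    qed
  next
    case False
    then show ?thesis using assms by (simp add: \<rho>_def not_integrable_contour_integral)
  qed
  also have "\<dots> = 2 * pi * (B * \<rho> powi (- n))"
    using power_int_add[of \<rho> "- (n + 1)" 1] assms(1) by (simp add: \<rho>_def)
  finally show ?thesis
    by (simp add: laurent_coeff_def \<rho>_def norm_divide norm_mult field_simps)
qed

lemma banach_space_of_analytic_imp_complete_seminormed:
  "banach_space_of_analytic r R E N \<Longrightarrow> complete_seminormed_function_space E N"
  unfolding banach_space_of_analytic_def by unfold_locales blast+

lemma laurent_coeff_bounded:
  assumes "0 \<le> r" "ereal r < R" "banach_space_of_analytic r R E N"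
  shows "\<exists>C. \<forall>f\<in>E. norm (laurent_coeff r R f n) \<le> C * N f"
proof -
  interpret complete_seminormed_function_space E N
    using assms(3) by (rule banach_space_of_analytic_imp_complete_seminormed)
  define \<rho> where "\<rho> = mid_radius r R"
  have sphere: "sphere 0 \<rho> \<subseteq> annulus r R" and "0 < \<rho>"
    using sphere_mid_radius_subset_annulus[OF assms(2)] mid_radius_bounds[OF assms(2)] assms(1)
    by (auto simp: \<rho>_def)
  have "\<exists>K. \<forall>f\<in>E. \<forall>z\<in>sphere 0 \<rho>. norm (f z) \<le> K * N f"
  proof (rule uniform_boundedness_evaluations)
    show "\<exists>C. \<forall>f\<in>E. norm (f z) \<le> C * N f" if "z \<in> sphere 0 \<rho>" for z
      using assms(3) sphere that unfolding banach_space_of_analytic_def by blast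
    show "bounded (f ` sphere 0 \<rho>)" if "f \<in> E" for f
    proof -
      have "continuous_on (sphere 0 \<rho>) f"
        using assms(3) that sphere unfolding banach_space_of_analytic_def
        by (meson continuous_on_subset holomorphic_on_imp_continuous_on)
      then show ?thesis by (intro compact_imp_bounded compact_continuous_image) auto
    qed
  qed
  then obtain K where K: "\<And>f z. f \<in> E \<Longrightarrow> norm z = \<rho> \<Longrightarrow> norm (f z) \<le> max K 0 * N f"
    by (metis mem_sphere_0 max.cobounded1 mult_right_mono nonneg order_trans)
  have "norm (laurent_coeff r R f n) \<le> max K 0 * \<rho> powi (- n) * N f" if "f \<in> E" for f
    using norm_laurent_coeff_le[of r R "max K 0 * N f" f n] K[OF that] nonneg[OF that] \<open>0 < \<rho>\<close>
    by (simp add: \<rho>_def mult_ac)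
  then show ?thesis by blast
qed

lemma coeff_functional_norm_eq:
  "coeff_functional_norm r R E N n = functional_norm E N (\<lambda>f. laurent_coeff r R f n)"
  unfolding coeff_functional_norm_def functional_norm_def ..

theorem proposition3p4:
  fixes r :: real and R :: ereal
    and E :: "(complex \<Rightarrow> complex) set" and N :: "(complex \<Rightarrow> complex) \<Rightarrow> real"
    and w :: "int \<Rightarrow> complex"
  assumes "0 \<le> r" and "ereal r < R"
    and "banach_space_of_analytic r R E N"
    and "\<forall>n. \<exists>f\<in>E. laurent_coeff r R f n \<noteq> 0"
    and "bounded_weighted_backward_shift r R E N w"
  shows "bdd_above (range (\<lambda>n. norm (w (n + 1)) *
            coeff_functional_norm r R E N (n + 1) / coeff_functional_norm r R E N n))"
proof -
  interpret complete_seminormed_function_space E N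
    using assms(3) by (rule banach_space_of_analytic_imp_complete_seminormed)
  obtain T C where T: "\<And>f. f \<in> E \<Longrightarrow> T f \<in> E"
      "\<And>f n. f \<in> E \<Longrightarrow> laurent_coeff r R (T f) (n - 1) = w n * laurent_coeff r R f n"
    and C: "\<And>f. f \<in> E \<Longrightarrow> N (T f) \<le> C * N f"
    using assms(5) unfolding bounded_weighted_backward_shift_def by blast
  have T_bounded: "N (T f) \<le> max C 0 * N f" if "f \<in> E" for f
    using order_trans[OF C[OF that] mult_right_mono[OF max.cobounded1 nonneg[OF that]]] .
  let ?k = "coeff_functional_norm r R E N"
  have k_step: "norm (w (n + 1)) * ?k (n + 1) \<le> max C 0 * ?k n" and k_nonneg: "0 \<le> ?k n" for n
  proof -
    obtain C\<^sub>n where C\<^sub>n: "\<And>f. f \<in> E \<Longrightarrow> norm (laurent_coeff r R f n) \<le> C\<^sub>n * N f"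
      using laurent_coeff_bounded[OF assms(1-3)] by blast
    show "norm (w (n + 1)) * ?k (n + 1) \<le> max C 0 * ?k n"
      unfolding coeff_functional_norm_eq
      using T(2)[of _ "n + 1"]
      by (intro functional_norm_transpose_le[OF C\<^sub>n laurent_coeff_cmult T(1) T_bounded]) auto
    show "0 \<le> ?k n"
      unfolding coeff_functional_norm_eq by (rule functional_norm_nonneg[OF C\<^sub>n])
  qed
  \<comment> \<open>If \<open>?k n = 0\<close> the quotient is 0 (\<open>x / 0 = 0\<close>).\<close>
  show ?thesis
  proof (rule bdd_aboveI2)
    fix n
    show "norm (w (n + 1)) * ?k (n + 1) / ?k n \<le> max C 0"
      using k_step[of n] k_nonneg[of n] by (cases "?k n = 0") (auto simp: divide_le_eq)
  qed
qed

end
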